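(* Let $E_1,\dots,E_m$ be mutually independent events on a probability space, let $p_i=\mathbf P(E_i)$, and assume $p_1\ge p_2\ge\dots\ge p_m$. Fix real numbers $0<a<b$ and define random variables $X_i=b$ on $E_i$ and $X_i=a$ on $E_i^c$. For a nonempty $\mathcal S\subseteq[m]$ define $$V(\mathcal S)=\mathbf E\Big[\ln\Big(\frac{1}{|\mathcal S|}\sum_{i\in\mathcal S}X_i\Big)\Big].$$ Then, for $1\le k\le m$, the set $[k]=\{1,\dots,k\}$ (the indices with the $k$ largest $p_i$) maximizes $V(\mathcal S)$ over all $\mathcal S\subseteq[m]$ with $|\mathcal S|=k$.
   Context: $V$ is the expected log-return of an equally weighted portfolio $\mathcal S$; a maximizer over $k$-element subsets is called a log-optimal portfolio. *)

theory Defs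
  imports "HOL-Probability.Probability"
begin

definition two_val :: "real \<Rightarrow> real \<Rightarrow> 'a set \<Rightarrow> 'a \<Rightarrow> real" where
  "two_val a b E \<omega> = (if \<omega> \<in> E then b else a)"

definition logret :: "'a measure \<Rightarrow> real \<Rightarrow> real \<Rightarrow> (nat \<Rightarrow> 'a set) \<Rightarrow> nat set \<Rightarrow> real" where
  "logret M a b E S =
     (\<integral>\<omega>. ln ((\<Sum>i\<in>S. two_val a b (E i) \<omega>) / real (card S)) \<partial>M)"

end

theory Submission
  imports Defs
begin

text \<open>Fix the other assets \<open>T\<close> and add one asset \<open>i\<close>. Writing \<open>V\<^sub>d\<close> for the expected
log-return when the added asset pays the constant \<open>d\<close>, independence of \<open>E i\<close> from the assets
in \<open>T\<close> gives \<open>V(T \<union> {i}) = V\<^sub>a + P(E i) (V\<^sub>b - V\<^sub>a)\<close>, an affine function of \<open>P(E i)\<close> with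
nonnegative slope because \<open>ln\<close> is increasing. Hence exchanging an asset for one with a larger
success probability never decreases \<open>V\<close>, and exchanging the indices of \<open>S\<close> outside \<open>[k]\<close>
one at a time for missing indices of \<open>[k]\<close> turns \<open>S\<close> into \<open>[k]\<close>.\<close>

definition logret_with :: "'a measure \<Rightarrow> real \<Rightarrow> real \<Rightarrow> (nat \<Rightarrow> 'a set) \<Rightarrow> nat set \<Rightarrow> real \<Rightarrow> real" where
  "logret_with M a b E T d =
     (\<integral>\<omega>. ln (((\<Sum>l\<in>T. two_val a b (E l) \<omega>) + d) / real (Suc (card T))) \<partial>M)"

lemma borel_measurable_two_val [measurable (raw)]:
  "A \<in> sets M \<Longrightarrow> two_val a b A \<in> borel_measurable M"
  unfolding two_val_def[abs_def] by (rule measurable_If_set) auto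

lemma two_val_vimage_in_sigma_sets:
  assumes "E \<subseteq> S" shows "two_val a b E -` A \<inter> S \<in> sigma_sets S {E}"
proof -
  have "two_val a b E -` A \<inter> S = (if a \<in> A then S - E else {}) \<union> (if b \<in> A then E else {})"
    using assms by (auto simp: two_val_def split: if_splits)
  then show ?thesis
    by (simp only:) (intro sigma_sets_Un; auto intro: sigma_sets.Empty sigma_sets.Basic sigma_sets.Compl)
qed

lemma (in prob_space) indep_vars_two_val:
  assumes indep: "indep_events E I"
  shows "indep_vars (\<lambda>_. borel) (\<lambda>i. two_val a b (E i)) I"
  unfolding indep_vars_def
proof (intro conjI ballI)
  have events: "E i \<in> events" if "i \<in> I" for i
    using indep that by (simp add: indep_events_def image_subset_iff)
  then show "random_variable borel (two_val a b (E i))" if "i \<in> I" for i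
    using that by simp
  have "indep_sets (\<lambda>i. sigma_sets (space M) {E i}) I"
    using indep by (intro indep_sets_sigma) (simp_all add: indep_events_def_alt Int_stable_def)
  then show "indep_sets (\<lambda>i. sigma_sets (space M) {two_val a b (E i) -` A \<inter> space M |A. A \<in> sets borel}) I"
  proof (rule indep_sets_mono_sets)
    fix i assume "i \<in> I"
    then have "E i \<subseteq> space M" using events sets.sets_into_space by blast
    then show "sigma_sets (space M) {two_val a b (E i) -` A \<inter> space M |A. A \<in> sets borel}
        \<subseteq> sigma_sets (space M) {E i}"
      by (intro sigma_sets_mono) (auto intro: two_val_vimage_in_sigma_sets)
  qed
qed

lemma (in prob_space) integrable_ln_sum_two_val:
  assumes events: "\<And>l. l \<in> T \<Longrightarrow> E l \<in> events"
    and "0 < a" "a \<le> b" "a \<le> d" "0 < c"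
  shows "integrable M (\<lambda>\<omega>. ln (((\<Sum>l\<in>T. two_val a b (E l) \<omega>) + d) / c))"
proof (rule integrable_const_bound)
  let ?lo = "a / c" and ?hi = "(real (card T) * b + d) / c"
  show "AE \<omega> in M. norm (ln (((\<Sum>l\<in>T. two_val a b (E l) \<omega>) + d) / c)) \<le> \<bar>ln ?lo\<bar> + \<bar>ln ?hi\<bar>"
  proof (rule AE_I2)
    fix \<omega>
    let ?x = "((\<Sum>l\<in>T. two_val a b (E l) \<omega>) + d) / c"
    have "0 \<le> (\<Sum>l\<in>T. two_val a b (E l) \<omega>)"
      using assms by (intro sum_nonneg) (simp add: two_val_def)
    moreover have "(\<Sum>l\<in>T. two_val a b (E l) \<omega>) \<le> (\<Sum>l\<in>T. b)"
      using assms by (intro sum_mono) (simp add: two_val_def)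
    ultimately have "?lo \<le> ?x" "?x \<le> ?hi"
      using assms by (simp_all add: divide_right_mono)
    moreover have "0 < ?lo" using assms by simp
    ultimately have "ln ?lo \<le> ln ?x" "ln ?x \<le> ln ?hi" by simp_all
    then show "norm (ln ?x) \<le> \<bar>ln ?lo\<bar> + \<bar>ln ?hi\<bar>" by simp
  qed
qed (use events in simp)

lemma (in prob_space) logret_with_mono:
  assumes "\<And>l. l \<in> T \<Longrightarrow> E l \<in> events" "0 < a" "a \<le> b" "a \<le> d" "d \<le> d'"
  shows "logret_with M a b E T d \<le> logret_with M a b E T d'"
  unfolding logret_with_def
proof (rule integral_mono)
  fix \<omega>
  have "0 \<le> (\<Sum>l\<in>T. two_val a b (E l) \<omega>)"
    using assms by (intro sum_nonneg) (simp add: two_val_def)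
  then show "ln (((\<Sum>l\<in>T. two_val a b (E l) \<omega>) + d) / real (Suc (card T)))
      \<le> ln (((\<Sum>l\<in>T. two_val a b (E l) \<omega>) + d') / real (Suc (card T)))"
    using assms by (simp add: divide_right_mono)
qed (use assms in \<open>auto intro: integrable_ln_sum_two_val\<close>)

lemma (in prob_space) logret_insert:
  assumes indep: "indep_events E I" and T: "finite T" "insert i T \<subseteq> I" "i \<notin> T"
    and ab: "0 < a" "a < b"
  shows "logret M a b E (insert i T)
    = logret_with M a b E T a + prob (E i) * (logret_with M a b E T b - logret_with M a b E T a)"
proof -
  have events: "E l \<in> events" if "l \<in> I" for l
    using indep that by (auto simp: indep_events_def)
  define g where "g \<omega> = (\<Sum>l\<in>T. two_val a b (E l) \<omega>)" for \<omega>
  define c where "c = real (Suc (card T))"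
  define F where "F d \<omega> = ln ((g \<omega> + d) / c)" for d \<omega>
  have integrable_F: "integrable M (F d)" if "a \<le> d" for d
    unfolding F_def g_def c_def using T events ab that
    by (intro integrable_ln_sum_two_val) auto
  have "indep_var borel (two_val a b (E i)) borel g"
    unfolding g_def using T
    by (intro indep_vars_sum indep_vars_subset[OF indep_vars_two_val[OF indep]]) auto
  then have "indep_var borel ((\<lambda>x. if x = b then 1 else 0) \<circ> two_val a b (E i))
      borel ((\<lambda>y. ln ((y + b) / c) - ln ((y + a) / c)) \<circ> g)"
    by (rule indep_var_compose) auto
  moreover have "(\<lambda>x. if x = b then 1 else 0 :: real) \<circ> two_val a b (E i) = indicator (E i)"
    using ab by (auto simp: fun_eq_iff two_val_def)
  ultimately have indep_indicator: "indep_var borel (indicator (E i)) borel (\<lambda>\<omega>. F b \<omega> - F a \<omega>)"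
    by (simp add: comp_def F_def)
  have Ei: "E i \<in> events" using T events by auto
  then have integrable_indicator: "integrable M (indicator (E i) :: 'a \<Rightarrow> real)"
    by (simp add: less_top[symmetric])
  have integrable_diff: "integrable M (\<lambda>\<omega>. F b \<omega> - F a \<omega>)"
    using integrable_F ab by simp
  have "logret M a b E (insert i T) = (\<integral>\<omega>. F a \<omega> + indicator (E i) \<omega> * (F b \<omega> - F a \<omega>) \<partial>M)"
    unfolding logret_def using T
    by (intro Bochner_Integration.integral_cong) (auto simp: F_def g_def c_def two_val_def add.commute)
  also have "\<dots> = (\<integral>\<omega>. F a \<omega> \<partial>M) + (\<integral>\<omega>. indicator (E i) \<omega> * (F b \<omega> - F a \<omega>) \<partial>M)"
    using integrable_F indep_var_integrable[OF indep_indicator integrable_indicator integrable_diff]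
    by (intro Bochner_Integration.integral_add) auto
  also have "(\<integral>\<omega>. indicator (E i) \<omega> * (F b \<omega> - F a \<omega>) \<partial>M) = prob (E i) * (\<integral>\<omega>. F b \<omega> - F a \<omega> \<partial>M)"
    using indep_var_lebesgue_integral[OF indep_indicator integrable_indicator integrable_diff] Ei by simp
  also have "(\<integral>\<omega>. F b \<omega> - F a \<omega> \<partial>M) = (\<integral>\<omega>. F b \<omega> \<partial>M) - (\<integral>\<omega>. F a \<omega> \<partial>M)"
    using integrable_F ab by (intro Bochner_Integration.integral_diff) auto
  finally show ?thesis
    by (simp add: logret_with_def F_def g_def c_def)
qed

lemma (in prob_space) logret_exchange:
  assumes "indep_events E I" "finite T" "insert i T \<subseteq> I" "insert j T \<subseteq> I" "i \<notin> T" "j \<notin> T"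
    and "prob (E i) \<le> prob (E j)" and "0 < a" "a < b"
  shows "logret M a b E (insert i T) \<le> logret M a b E (insert j T)"
proof -
  have "E l \<in> events" if "l \<in> T" for l
    using assms that by (auto simp: indep_events_def)
  then have "0 \<le> logret_with M a b E T b - logret_with M a b E T a"
    using assms logret_with_mono[of T E a b a b] by simp
  then show ?thesis
    using assms by (simp add: logret_insert mult_right_mono)
qed

lemma initial_segment_maximal:
  fixes f :: "nat set \<Rightarrow> 'b :: preorder"
  assumes exchange: "\<And>T i j. T \<subseteq> {1..m} \<Longrightarrow> 1 \<le> j \<Longrightarrow> j \<le> i \<Longrightarrow> i \<le> m \<Longrightarrow> i \<notin> T \<Longrightarrow> j \<notin> T
      \<Longrightarrow> f (insert i T) \<le> f (insert j T)"
    and "S \<subseteq> {1..m}" "card S = k"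
  shows "f S \<le> f {1..k}"
  using assms(2,3)
proof (induction "card (S - {1..k})" arbitrary: S rule: less_induct)
  case less
  have finite_S: "finite S" using less.prems finite_subset by blast
  show ?case
  proof (cases "S \<subseteq> {1..k}")
    case True
    then have "S = {1..k}" using less.prems by (intro card_seteq) auto
    then show ?thesis by simp
  next
    case False
    then obtain i where i: "i \<in> S" "i \<notin> {1..k}" by blast
    have "card ({1..k} - S) = card (S - {1..k})"
      using finite_S less.prems by (simp add: card_Diff_subset_Int Int_commute)
    also have "\<dots> > 0" using i finite_S by (auto simp: card_gt_0_iff)
    finally have "{1..k} - S \<noteq> {}" by (metis card.empty less_irrefl)
    then obtain j where j: "j \<in> {1..k}" "j \<notin> S" by blast
    obtain T where S: "S = insert i T" "i \<notin> T" using mk_disjoint_insert[OF i(1)] by blast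
    have "f S \<le> f (insert j T)"
      using less.prems i j S(2) by (simp only: S(1)) (intro exchange; auto)
    also have "f (insert j T) \<le> f {1..k}"
    proof (rule less.hyps)
      have "insert j T - {1..k} = (S - {1..k}) - {i}" using S j by auto
      then show "card (insert j T - {1..k}) < card (S - {1..k})"
        using i finite_S by (simp only:) (rule card_Diff1_less; auto)
      show "insert j T \<subseteq> {1..m}" "card (insert j T) = k"
        using less.prems i j finite_S by (auto simp: S)
    qed
    finally show ?thesis .
  qed
qed

theorem theorem4:
  fixes M :: "'a measure" and E :: "nat \<Rightarrow> 'a set" and m k :: nat and a b :: real
  assumes "prob_space M"
    and "\<And>i. i \<in> {1..m} \<Longrightarrow> E i \<in> sets M"
    and "prob_space.indep_events M E {1..m}"
    and "\<And>i j. 1 \<le> i \<Longrightarrow> i \<le> j \<Longrightarrow> j \<le> m \<Longrightarrow> measure M (E j) \<le> measure M (E i)"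
    and "0 < a" and "a < b"
    and "1 \<le> k" and "k \<le> m"
  shows "\<forall>S. S \<subseteq> {1..m} \<and> card S = k \<longrightarrow> logret M a b E S \<le> logret M a b E {1..k}"
proof (intro allI impI, elim conjE)
  interpret prob_space M by (rule assms(1))
  fix S assume "S \<subseteq> {1..m}" "card S = k"
  then show "logret M a b E S \<le> logret M a b E {1..k}"
  proof (rule initial_segment_maximal[rotated])
    fix T i j assume T: "T \<subseteq> {1..m}" and "1 \<le> j" "j \<le> i" "i \<le> m" "i \<notin> T" "j \<notin> T"
    moreover have "finite T" using T by (rule finite_subset) simp
    ultimately show "logret M a b E (insert i T) \<le> logret M a b E (insert j T)"
      using assms(3-6) by (intro logret_exchange[where I = "{1..m}"]) auto
  qed
qed

end
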